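(* Let $k\geq 2$ be an integer and let $F_k(x,t)=\sum_{n\geq 0}\sum_{w\in[k]^n} t^{\mathrm{s}(w)}x^n$. Put $\phi=\dfrac{1-x(t-1)}{2x(t-1)}$ and \[\gamma(x,t)=\frac{k}{1-3x(t-1)}-\frac{2x(t-1)}{(1-3x(t-1))^{2}}\cdot\frac{U_{k}(\phi)-U_{k-1}(\phi)-1}{U_{k}(\phi)}.\] Then \[F_k(x,t)=\frac{1}{1-x\gamma(x,t)}.\]
   Context: For an integer $k\geq 2$, $[k]=\{1,2,\ldots,k\}$ and a word over $k$ of length $n$ is an element $w=w_1\cdots w_n\in[k]^n$ ($[k]^0$ consists of the empty word). For such $w$, $\mathrm{s}(w)$ is the number of indices $1\leq i\leq n-1$ with $|w_{i+1}-w_i|\leq 1$ (so $\mathrm{s}(w)=0$ if $n\leq 1$). $U_n$ denotes the Chebyshev polynomial of the second kind: $U_0(x)=1$, $U_1(x)=2x$, $U_{n+1}(x)=2xU_n(x)-U_{n-1}(x)$. The identity is an identity of rational functions in $x,t$ (equivalently of formal power series in $x$ with coefficients polynomial in $t$). *)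

theory Defs
  imports "HOL-Computational_Algebra.Computational_Algebra"
begin

definition words :: "nat \<Rightarrow> nat \<Rightarrow> nat list set" where
  "words k n = {w. length w = n \<and> set w \<subseteq> {1..k}}"

text \<open>s(w): number of indices i (1 \<le> i \<le> n-1) with |w_(i+1) - w_i| \<le> 1 (0-based here).\<close>
definition sstat :: "nat list \<Rightarrow> nat" where
  "sstat w = card {i. i + 1 < length w \<and> \<bar>int (w ! (i+1)) - int (w ! i)\<bar> \<le> 1}"

fun chebU :: "nat \<Rightarrow> 'a::comm_ring_1 \<Rightarrow> 'a" where
  "chebU 0 z = 1"
| "chebU (Suc 0) z = 2 * z"
| "chebU (Suc (Suc n)) z = 2 * z * chebU (Suc n) z - chebU n z"

type_synonym ratfun = "real poly fract"

definition tvar :: ratfun where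
  "tvar = Fract [:0, 1:] 1"

definition Fk :: "nat \<Rightarrow> ratfun fls" where
  "Fk k = fps_to_fls (Abs_fps (\<lambda>n. \<Sum>w\<in>words k n. tvar ^ sstat w))"

end

(*
  Let G_i be the generating function of the nonempty words starting with the letter i, and
  y = x (t - 1). Prepending i to a word adds a step counted by s exactly when the old first
  letter lies in {i - 1, i, i + 1}, so G_i = x F + y (G_(i-1) + G_i + G_(i+1)) for 1 <= i <= k,
  with G_0 = G_(k+1) = 0 and F = 1 + sum_i G_i. As y has positive order, this three-term system
  has at most one solution, and by the Chebyshev recurrence it is G_i = x F V_i with
  V_i = (1 - (U_(i-1)(phi) + U_(k-i)(phi)) / U_k(phi)) / (1 - 3 y). Summing the V_i with
  (2 phi - 2) sum_(m<k) U_m(phi) = U_k(phi) - U_(k-1)(phi) - 1 gives gamma, whence F = 1 + x F gamma.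
*)
theory Submission
  imports Defs
begin

lemma words_0: "words k 0 = {[]}"
  unfolding words_def by auto

lemma words_Suc: "words k (Suc n) = (\<lambda>(i, w). i # w) ` ({1..k} \<times> words k n)"
  unfolding words_def by (auto simp: length_Suc_conv image_iff)

lemma hd_in_words: "w \<in> words k n \<Longrightarrow> w \<noteq> [] \<Longrightarrow> hd w \<in> {1..k}"
  unfolding words_def using hd_in_set by blast

lemma sum_words_Suc:
  "(\<Sum>w\<in>words k (Suc n). g w) = (\<Sum>i\<in>{1..k}. \<Sum>w\<in>words k n. g (i # w))"
proof -
  have "inj_on (\<lambda>(i, w). i # w) ({1..k} \<times> words k n)"
    by (auto simp: inj_on_def)
  then have "(\<Sum>w\<in>words k (Suc n). g w) = (\<Sum>(i, w)\<in>{1..k} \<times> words k n. g (i # w))"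
    unfolding words_Suc by (simp add: sum.reindex case_prod_unfold)
  then show ?thesis
    by (simp add: sum.cartesian_product)
qed

lemma sstat_Cons_Cons:
  "sstat (a # b # w) = sstat (b # w) + (if \<bar>int b - int a\<bar> \<le> 1 then 1 else 0)"
proof -
  define P where "P l i \<longleftrightarrow> i + 1 < length l \<and> \<bar>int (l ! (i + 1)) - int (l ! i)\<bar> \<le> 1"
    for l :: "nat list" and i
  have "{i. P (a # b # w) i} = Suc ` {i. P (b # w) i} \<union> {i. i = 0 \<and> \<bar>int b - int a\<bar> \<le> 1}"
  proof (intro set_eqI iffI)
    fix i assume "i \<in> {i. P (a # b # w) i}"
    then show "i \<in> Suc ` {i. P (b # w) i} \<union> {i. i = 0 \<and> \<bar>int b - int a\<bar> \<le> 1}"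
      by (cases i) (auto simp: P_def)
  qed (auto simp: P_def)
  moreover have "finite {i. P (b # w) i}"
    by (rule finite_subset[of _ "{..<length (b # w)}"]) (auto simp: P_def)
  ultimately show ?thesis
    unfolding sstat_def P_def[symmetric] by (auto simp: card_image)
qed

lemma sstat_Nil [simp]: "sstat [] = 0"
  and sstat_singleton [simp]: "sstat [a] = 0"
  by (simp_all add: sstat_def)

definition head_weight :: "'a::comm_ring_1 \<Rightarrow> nat \<Rightarrow> nat list \<Rightarrow> 'a" where
  "head_weight t i w = (if w \<noteq> [] \<and> hd w = i then t ^ sstat w else 0)"

lemma power_sstat_Cons:
  fixes t :: "'a::comm_ring_1"
  assumes "w \<noteq> []" "i \<ge> 1"
  shows "t ^ sstat (i # w) =
    t ^ sstat w + (t - 1) * (head_weight t (i - 1) w + head_weight t i w + head_weight t (i + 1) w)"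
proof -
  obtain b v where w: "w = b # v"
    using assms(1) by (cases w) auto
  have "\<bar>int b - int i\<bar> \<le> 1 \<longleftrightarrow> b = i - 1 \<or> b = i \<or> b = i + 1"
    using assms(2) by auto
  then show ?thesis
    using assms(2) by (auto simp: w head_weight_def sstat_Cons_Cons algebra_simps)
qed

definition words_gf :: "'a::comm_ring_1 \<Rightarrow> nat \<Rightarrow> 'a fps" where
  "words_gf t k = Abs_fps (\<lambda>n. \<Sum>w\<in>words k n. t ^ sstat w)"

definition head_gf :: "'a::comm_ring_1 \<Rightarrow> nat \<Rightarrow> nat \<Rightarrow> 'a fps" where
  "head_gf t k i = Abs_fps (\<lambda>n. \<Sum>w\<in>words k n. head_weight t i w)"

lemma head_gf_nth_0 [simp]: "head_gf t k i $ 0 = 0"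
  by (simp add: head_gf_def words_0 head_weight_def)

lemma head_gf_outside: "i \<notin> {1..k} \<Longrightarrow> head_gf t k i = 0"
  unfolding head_gf_def head_weight_def
  by (intro fps_ext) (auto intro!: sum.neutral dest: hd_in_words)

lemma head_gf_nth_Suc:
  assumes "i \<in> {1..k}"
  shows "head_gf t k i $ Suc n = (\<Sum>w\<in>words k n. t ^ sstat (i # w))"
proof -
  have "head_gf t k i $ Suc n = (\<Sum>j\<in>{1..k}. \<Sum>w\<in>words k n. if j = i then t ^ sstat (j # w) else 0)"
    by (simp add: head_gf_def sum_words_Suc head_weight_def)
  also have "\<dots> = (\<Sum>w\<in>words k n. \<Sum>j\<in>{1..k}. if j = i then t ^ sstat (j # w) else 0)"
    by (rule sum.swap)
  also have "\<dots> = (\<Sum>w\<in>words k n. t ^ sstat (i # w))"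
    using assms by (simp add: sum.delta')
  finally show ?thesis .
qed

lemma words_gf_eq: "words_gf t k = 1 + (\<Sum>i\<in>{1..k}. head_gf t k i)"
proof (rule fps_ext)
  fix n
  show "words_gf t k $ n = (1 + (\<Sum>i\<in>{1..k}. head_gf t k i)) $ n"
  proof (cases n)
    case 0
    then show ?thesis by (simp add: words_gf_def words_0 fps_sum_nth)
  next
    case (Suc m)
    then show ?thesis
      by (simp add: words_gf_def fps_sum_nth head_gf_nth_Suc sum_words_Suc)
  qed
qed

lemma head_gf_eq:
  assumes i: "i \<in> {1..k}"
  shows "head_gf t k i = fps_X * words_gf t k
    + fps_X * fps_const (t - 1) * (head_gf t k (i - 1) + head_gf t k i + head_gf t k (i + 1))"
proof -
  have rec: "head_gf t k i $ Suc n = words_gf t k $ n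
      + (t - 1) * (head_gf t k (i - 1) $ n + head_gf t k i $ n + head_gf t k (i + 1) $ n)" for n
  proof (cases n)
    case 0
    then show ?thesis using i by (simp add: head_gf_nth_Suc words_gf_def words_0)
  next
    case (Suc m)
    have "w \<noteq> []" if "w \<in> words k n" for w
      using that Suc by (auto simp: words_def)
    then have "(\<Sum>w\<in>words k n. t ^ sstat (i # w)) = (\<Sum>w\<in>words k n. t ^ sstat w
        + (t - 1) * (head_weight t (i - 1) w + head_weight t i w + head_weight t (i + 1) w))"
      using i by (intro sum.cong) (auto simp: power_sstat_Cons)
    then show ?thesis
      unfolding head_gf_nth_Suc[OF i]
      by (simp add: words_gf_def head_gf_def sum.distrib flip: sum_distrib_left)
  qed
  show ?thesis (is "_ = ?rhs")
  proof (rule fps_ext)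
    fix n
    show "head_gf t k i $ n = ?rhs $ n"
      using rec by (cases n) (simp_all add: mult.assoc)
  qed
qed

definition chebU_pred :: "nat \<Rightarrow> 'a::comm_ring_1 \<Rightarrow> 'a" where
  "chebU_pred m z = (if m = 0 then 0 else chebU (m - 1) z)"

lemma chebU_pred_rec:
  assumes "m \<ge> 1"
  shows "chebU_pred (m - 1) z + chebU_pred (m + 1) z = 2 * z * chebU_pred m z"
proof -
  obtain n where "m = Suc n"
    using assms by (cases m) auto
  then show ?thesis
    by (cases n) (simp_all add: chebU_pred_def)
qed

lemma chebU_sum:
  assumes "n \<ge> 1"
  shows "(\<Sum>m<n. chebU m z) * (2 * z - 2) = chebU n z - chebU (n - 1) z - (1 :: 'a::comm_ring_1)"
  using assms
proof (induction n rule: dec_induct)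
  case (step n)
  then obtain m where "n = Suc m"
    by (cases n) auto
  with step.IH show ?case
    by (simp add: algebra_simps)
qed simp

definition three_term_sol :: "'a::field \<Rightarrow> 'a \<Rightarrow> nat \<Rightarrow> nat \<Rightarrow> 'a" where
  "three_term_sol z y k j =
    (1 - (chebU_pred j z + chebU_pred (k + 1 - j) z) / chebU k z) / (1 - 3 * y)"

lemma three_term_sol_boundary:
  assumes "chebU k z \<noteq> 0"
  shows "three_term_sol z y k 0 = 0" and "three_term_sol z y k (k + 1) = 0"
  using assms by (simp_all add: three_term_sol_def chebU_pred_def)

lemma three_term_sol_rec:
  fixes z y :: "'a::field"
  assumes zy: "2 * z * y = 1 - y" and "1 - 3 * y \<noteq> 0" and j: "j \<in> {1..k}"
  shows "three_term_sol z y k j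
    = 1 + y * (three_term_sol z y k (j - 1) + three_term_sol z y k j + three_term_sol z y k (j + 1))"
proof -
  define R where "R i = chebU_pred i z + chebU_pred (k + 1 - i) z" for i
  have "chebU_pred (j - 1) z + chebU_pred (j + 1) z = 2 * z * chebU_pred j z"
    using j by (intro chebU_pred_rec) simp
  moreover have "chebU_pred (k + 1 - (j - 1)) z + chebU_pred (k + 1 - (j + 1)) z
      = 2 * z * chebU_pred (k + 1 - j) z"
    using j chebU_pred_rec[of "k + 1 - j" z] by (simp add: Suc_diff_le add.commute)
  ultimately have "R (j - 1) + R (j + 1) = 2 * z * R j"
    unfolding R_def by (simp add: algebra_simps)
  then have "y * (R (j - 1) + R j + R (j + 1)) = (y + 2 * z * y) * R j"
    by (simp add: algebra_simps)
  then have R_sum: "y * (R (j - 1) + R j + R (j + 1)) = R j"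
    using zy by simp
  define c where "c = 1 / (1 - 3 * y)"
  have c: "c = 1 + 3 * y * c"
    using assms(2) by (simp add: c_def field_simps)
  have V: "three_term_sol z y k i = c - c / chebU k z * R i" for i
    by (simp add: three_term_sol_def R_def c_def diff_divide_distrib)
  have "1 + y * (three_term_sol z y k (j - 1) + three_term_sol z y k j + three_term_sol z y k (j + 1))
      = 1 + 3 * y * c - c / chebU k z * (y * (R (j - 1) + R j + R (j + 1)))"
    unfolding V by (simp add: algebra_simps)
  also have "\<dots> = c - c / chebU k z * R j"
    using c by (simp only: R_sum)
  finally show ?thesis
    by (simp only: V)
qed

lemma three_term_sol_sum:
  fixes z y :: "'a::field"
  assumes zy: "2 * z * y = 1 - y" and "1 - 3 * y \<noteq> 0" and "k \<ge> 1"
  shows "(\<Sum>j\<in>{1..k}. three_term_sol z y k j) = of_nat k / (1 - 3 * y)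
    - 2 * y / (1 - 3 * y) ^ 2 * ((chebU k z - chebU (k - 1) z - 1) / chebU k z)"
proof -
  define S where "S = (\<Sum>m<k. chebU m z)"
  have S1: "(\<Sum>j\<in>{1..k}. chebU_pred j z) = S"
    unfolding S_def using sum.atLeast1_atMost_eq[of "\<lambda>j. chebU_pred j z" k]
    by (simp add: chebU_pred_def)
  have S2: "(\<Sum>j\<in>{1..k}. chebU_pred (k + 1 - j) z) = S"
    using sum.atLeastAtMost_rev[of "\<lambda>j. chebU_pred j z" 1 k] S1 by simp
  have S_eq: "S * (1 - 3 * y) = (chebU k z - chebU (k - 1) z - 1) * y"
  proof -
    have "(2 * z - 2) * y = 1 - 3 * y"
      using zy by (simp add: algebra_simps)
    then have "S * (1 - 3 * y) = S * (2 * z - 2) * y"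
      by (simp add: mult.assoc)
    also have "\<dots> = (chebU k z - chebU (k - 1) z - 1) * y"
      using chebU_sum[OF assms(3), of z] by (simp add: S_def)
    finally show ?thesis .
  qed
  define c where "c = 1 / (1 - 3 * y)"
  have "(\<Sum>j\<in>{1..k}. three_term_sol z y k j)
      = (\<Sum>j\<in>{1..k}. c - c / chebU k z * (chebU_pred j z + chebU_pred (k + 1 - j) z))"
    by (simp add: three_term_sol_def c_def diff_divide_distrib ac_simps)
  also have "\<dots> = of_nat k * c - c / chebU k z * (S + S)"
    by (simp only: sum_subtractf sum.distrib S1 S2 flip: sum_distrib_left) simp
  also have "\<dots> = of_nat k * c - 2 * y * c ^ 2 * ((chebU k z - chebU (k - 1) z - 1) / chebU k z)"
  proof -
    have S_c: "S = (chebU k z - chebU (k - 1) z - 1) * y * c"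
      using S_eq assms(2) by (simp add: c_def field_simps)
    show ?thesis
      unfolding S_c by (simp add: divide_inverse power2_eq_square algebra_simps)
  qed
  finally show ?thesis
    by (simp add: c_def power_one_over)
qed

(* y^n U_n((1 - y) / (2 y)) as a polynomial in y; its constant term 1 keeps U_n(phi) nonzero. *)
fun chebU_homog :: "nat \<Rightarrow> 'a::comm_ring_1 \<Rightarrow> 'a" where
  "chebU_homog 0 y = 1"
| "chebU_homog (Suc 0) y = 1 - y"
| "chebU_homog (Suc (Suc n)) y = (1 - y) * chebU_homog (Suc n) y - y ^ 2 * chebU_homog n y"

lemma power_mult_chebU:
  fixes z y :: "'a::comm_ring_1"
  assumes zy: "2 * z * y = 1 - y"
  shows "y ^ n * chebU n z = chebU_homog n y"
  using zy
proof (induction n y rule: chebU_homog.induct)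
  case (3 n y)
  have "y ^ Suc (Suc n) * chebU (Suc (Suc n)) z
      = (2 * z * y) * (y ^ Suc n * chebU (Suc n) z) - y ^ 2 * (y ^ n * chebU n z)"
    by (simp add: algebra_simps power2_eq_square)
  with 3 show ?case
    by simp
qed (simp_all add: algebra_simps)

lemma fps_to_fls_chebU_homog: "fps_to_fls (chebU_homog n Y) = chebU_homog n (fps_to_fls Y)"
  by (induction n Y rule: chebU_homog.induct)
    (simp_all add: fls_times_fps_to_fls fps_to_fls_power)

lemma chebU_homog_nth_0: "Y $ 0 = 0 \<Longrightarrow> chebU_homog n Y $ 0 = 1"
  by (induction n Y rule: chebU_homog.induct) (simp_all add: power2_eq_square)

lemma chebU_fls_nonzero:
  fixes z :: "'a::comm_ring_1 fls"
  assumes "Y $ 0 = 0" and "2 * z * fps_to_fls Y = 1 - fps_to_fls Y"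
  shows "chebU n z \<noteq> 0"
proof
  assume "chebU n z = 0"
  then have "chebU_homog n Y = 0"
    using power_mult_chebU[OF assms(2), of n] by (simp flip: fps_to_fls_chebU_homog)
  then show False
    using chebU_homog_nth_0[OF assms(1), of n] by simp
qed

(* Multiplication by y raises the subdegree, so no nonzero D j can have minimal subdegree. *)
lemma fls_three_term_recurrence_eq_0:
  fixes D :: "nat \<Rightarrow> 'a::field fls"
  assumes y: "fls_subdegree y \<ge> 1"
    and rec: "\<And>j. j \<in> {1..k} \<Longrightarrow> D j = y * (D (j - 1) + D j + D (j + 1))"
    and "D 0 = 0" and "D (k + 1) = 0" and "j \<le> k + 1"
  shows "D j = 0"
proof (rule ccontr)
  assume "D j \<noteq> 0"
  define S where "S = {i. i \<le> k + 1 \<and> D i \<noteq> 0}"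
  have "finite S" and "j \<in> S"
    using \<open>D j \<noteq> 0\<close> \<open>j \<le> k + 1\<close> by (auto simp: S_def)
  define m where "m = Min ((\<lambda>i. fls_subdegree (D i)) ` S)"
  have "m \<in> (\<lambda>i. fls_subdegree (D i)) ` S"
    unfolding m_def using \<open>finite S\<close> \<open>j \<in> S\<close> by (intro Min_in) auto
  then obtain i where i: "i \<in> S" "fls_subdegree (D i) = m"
    by blast
  have m_le: "i' \<le> k + 1 \<Longrightarrow> D i' \<noteq> 0 \<Longrightarrow> m \<le> fls_subdegree (D i')" for i'
    using \<open>finite S\<close> by (auto simp: m_def S_def)
  have "i \<le> k + 1" "D i \<noteq> 0"
    using i(1) by (auto simp: S_def)
  then have "i \<in> {1..k}"
    using assms(3,4) by (cases "i = 0"; cases "i = k + 1") auto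
  define E where "E = D (i - 1) + D i + D (i + 1)"
  have "D i = y * E"
    using rec[OF \<open>i \<in> {1..k}\<close>] by (simp add: E_def)
  moreover have "y \<noteq> 0" "E \<noteq> 0"
    using y \<open>D i = y * E\<close> i(1) by (auto simp: S_def)
  moreover have "m \<le> fls_subdegree E"
  proof (rule fls_subdegree_geI[OF \<open>E \<noteq> 0\<close>])
    fix n assume "n < m"
    have "fls_nth (D i') n = 0" if "i' \<le> k + 1" for i'
      using m_le[OF that] \<open>n < m\<close> by (cases "D i' = 0") auto
    moreover have "i - 1 \<le> k + 1" "i \<le> k + 1" "i + 1 \<le> k + 1"
      using \<open>i \<in> {1..k}\<close> by auto
    ultimately show "fls_nth E n = 0"
      by (simp add: E_def)
  qed
  ultimately have "fls_subdegree (D i) \<ge> m + 1"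
    using y by simp
  then show False
    using i(2) by simp
qed

lemma fls_three_term_recurrence_solution:
  fixes G V :: "nat \<Rightarrow> 'a::field fls"
  assumes "fls_subdegree y \<ge> 1"
    and "\<And>j. j \<in> {1..k} \<Longrightarrow> G j = a + y * (G (j - 1) + G j + G (j + 1))"
    and "\<And>j. j \<in> {1..k} \<Longrightarrow> V j = 1 + y * (V (j - 1) + V j + V (j + 1))"
    and "G 0 = 0" and "G (k + 1) = 0" and "V 0 = 0" and "V (k + 1) = 0" and "j \<le> k + 1"
  shows "G j = a * V j"
proof -
  have "G j - a * V j = 0"
  proof (rule fls_three_term_recurrence_eq_0[OF assms(1), where D = "\<lambda>i. G i - a * V i"])
    fix i assume i: "i \<in> {1..k}"
    have "G i - a * V i
        = (a + y * (G (i - 1) + G i + G (i + 1))) - a * (1 + y * (V (i - 1) + V i + V (i + 1)))"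
      using assms(2,3)[OF i] by (rule arg_cong2)
    then show "G i - a * V i
        = y * ((G (i - 1) - a * V (i - 1)) + (G i - a * V i) + (G (i + 1) - a * V (i + 1)))"
      by (simp add: algebra_simps)
  qed (use assms(4-8) in auto)
  then show ?thesis
    by simp
qed

lemma fps_to_fls_sum: "fps_to_fls (\<Sum>i\<in>A. f i) = (\<Sum>i\<in>A. fps_to_fls (f i))"
  by (induction A rule: infinite_finite_induct) auto

lemma one_minus_fps_to_fls_nonzero:
  assumes "Y $ 0 = 0"
  shows "1 - fps_to_fls Y \<noteq> (0 :: 'a::comm_ring_1 fls)"
proof -
  have "(1 - Y) $ 0 \<noteq> 0"
    using assms by simp
  then have "1 - Y \<noteq> 0"
    by (metis fps_zero_nth)
  then show ?thesis
    by simp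
qed

lemma fls_head_gf_eq:
  assumes "i \<in> {1..k}"
  shows "fps_to_fls (head_gf t k i) = fls_X * fps_to_fls (words_gf t k)
    + fls_X * fls_const (t - 1) * (fps_to_fls (head_gf t k (i - 1))
        + fps_to_fls (head_gf t k i) + fps_to_fls (head_gf t k (i + 1)))"
  using arg_cong[OF head_gf_eq[OF assms], of fps_to_fls]
  by (simp add: fls_times_fps_to_fls)

lemma fls_words_gf_eq:
  fixes t :: "'a::field_char_0"
  assumes "t \<noteq> 1" and "k \<ge> 1"
  defines "y \<equiv> fls_X * fls_const (t - 1)"
  defines "z \<equiv> (1 - y) / (2 * y)"
  shows "fps_to_fls (words_gf t k) = 1 / (1 - fls_X * (of_nat k / (1 - 3 * y)
    - 2 * y / (1 - 3 * y) ^ 2 * ((chebU k z - chebU (k - 1) z - 1) / chebU k z)))"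
proof -
  define Y where "Y = fps_X * fps_const (t - 1)"
  have y_Y: "y = fps_to_fls Y" and "Y $ 0 = 0"
    by (simp_all add: y_def Y_def fls_times_fps_to_fls)
  have y_subdegree: "fls_subdegree y \<ge> 1" and "y \<noteq> 0"
    using assms(1) by (simp_all add: y_def)
  have zy: "2 * z * y = 1 - y"
    using \<open>y \<noteq> 0\<close> by (simp add: z_def)
  have "1 - 3 * y \<noteq> 0"
    using one_minus_fps_to_fls_nonzero[of "3 * Y"] \<open>Y $ 0 = 0\<close>
    by (simp add: y_Y fls_times_fps_to_fls)
  have "chebU k z \<noteq> 0"
    using chebU_fls_nonzero[OF \<open>Y $ 0 = 0\<close>] zy unfolding y_Y by blast
  define x F G where "x = (fls_X :: 'a fls)" and "F = fps_to_fls (words_gf t k)"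
    and "G i = fps_to_fls (head_gf t k i)" for i
  have G_eq: "G j = x * F * three_term_sol z y k j" if "j \<le> k + 1" for j
  proof (rule fls_three_term_recurrence_solution[OF y_subdegree _ _ _ _ _ _ that])
    fix i assume "i \<in> {1..k}"
    then show "G i = x * F + y * (G (i - 1) + G i + G (i + 1))"
      using fls_head_gf_eq by (simp add: x_def F_def G_def y_def mult.assoc)
  qed (use three_term_sol_rec[OF zy \<open>1 - 3 * y \<noteq> 0\<close>] three_term_sol_boundary[OF \<open>chebU k z \<noteq> 0\<close>]
      in \<open>simp_all add: G_def head_gf_outside\<close>)
  define s where "s = (\<Sum>j\<in>{1..k}. three_term_sol z y k j)"
  have "F = 1 + (\<Sum>j\<in>{1..k}. G j)"
    by (simp add: F_def G_def words_gf_eq fps_to_fls_sum)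
  also have "\<dots> = 1 + x * F * s"
    unfolding s_def sum_distrib_left
    by (intro arg_cong[where f = "(+) 1"] sum.cong) (auto simp: G_eq)
  finally have "F * (1 - x * s) = 1"
    by algebra
  then have "F = 1 / (1 - x * s)"
    by (metis mult_zero_right nonzero_eq_divide_eq zero_neq_one)
  then show ?thesis
    using three_term_sol_sum[OF zy \<open>1 - 3 * y \<noteq> 0\<close> assms(2)] by (simp add: F_def x_def s_def)
qed

lemma tvar_neq_1: "tvar \<noteq> 1"
  unfolding tvar_def by (simp add: One_fract_def eq_fract one_pCons)

theorem theorem1:
  fixes k :: nat
  assumes "k \<ge> 2"
  defines "x \<equiv> (fls_X :: ratfun fls)"
      and "t \<equiv> fls_const tvar"
  defines "\<phi> \<equiv> (1 - x * (t - 1)) / (2 * x * (t - 1))"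
  defines "\<gamma> \<equiv> of_nat k / (1 - 3 * x * (t - 1))
              - (2 * x * (t - 1)) / (1 - 3 * x * (t - 1)) ^ 2
                * ((chebU k \<phi> - chebU (k - 1) \<phi> - 1) / chebU k \<phi>)"
  shows "Fk k = 1 / (1 - x * \<gamma>)"
proof -
  have "t - 1 = fls_const (tvar - 1)"
    unfolding t_def by (intro fls_eqI) simp
  then have "x * (t - 1) = fls_X * fls_const (tvar - 1)"
    by (simp add: x_def)
  then show ?thesis
    using fls_words_gf_eq[OF tvar_neq_1, of k] assms(1)
    unfolding Fk_def \<gamma>_def \<phi>_def mult.assoc
    by (simp add: x_def words_gf_def)
qed

end
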